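(* Let $X\subseteq\mathbb{R}^m$, $f:X\to\mathbb{R}^d$ with $a_{i0}\le f_i(x)\le a_{in}$ on $X$, and $\theta=(\theta_1,\dots,\theta_\kappa):\mathbb{R}^d\to\mathbb{R}^\kappa$ a vector of multilinear functions $\theta_k(s_{1n},\dots,s_{dn})=\sum_{I\in\mathcal{I}_k}c^k_I\prod_{i\in I}s_{in}$. Let $u:X\to\mathbb{R}^{d\times(n+1)}$ be convex with $u_{i0}(x)=a_{i0}$, $u_{in}(x)=f_i(x)$, $u_{ij}(x)\le\min\{f_i(x),a_{ij}\}$ ($j\in[n-1]$), and $W$ a convex set containing $\{(x,f(x))\mid x\in X\}$. Then, identifying $f$ with $s_{\cdot n}=(s_{1n},\dots,s_{dn})$, the set $\{(\vartheta,w,s,\delta)\mid(\vartheta,w,s)\text{ satisfies (HQ)},\ (Z(s),\delta)\text{ satisfies (Inc-1)}\}$ is an ideal formulation of $\bigcup_{H\in\mathcal{H}}\operatorname{conv}\bigl(\{(f,\theta(f))\mid f\in H\}\bigr)$, and adding $u(x)\le s$ and $(x,s_{\cdot n})\in W$ yields an MICP relaxation of the graph of $\theta\circ f$.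
   Context: $d,n,\kappa\ge1$, $[k]=\{1,\dots,k\}$, $E=\{0,\dots,n\}^d$; each $\mathcal{I}_k$ is a collection of subsets of $[d]$, $c^k_I\in\mathbb{R}$. $a\in\mathbb{R}^{d\times(n+1)}$ with $a_{i0}<\dots<a_{in}$; integers $0=\tau(i,0)<\dots<\tau(i,l_i)=n$; $\mathcal{H}=\{\prod_i[a_{i\tau(i,t_i-1)},a_{i\tau(i,t_i)}]\mid t_i\in[l_i]\}$. $\Delta_i=\{z_i\in\mathbb{R}^{n+1}\mid1=z_{i0}\ge\dots\ge z_{in}\ge0\}$. (Inc-1): $z_i\in\Delta_i$, $\delta_{it}\in\{0,1\}$, $z_{i\tau(i,t)}\ge\delta_{it}\ge z_{i\tau(i,t)+1}$ ($i\in[d]$, $t\in[l_i-1]$). $Z(s)_{i0}=1$, $Z(s)_{ij}=(s_{ij}-s_{i,j-1})/(a_{ij}-a_{i,j-1})$. $v_{ij}\in\mathbb{R}^{n+1}$ has $k$-th component $a_{i,\min\{k,j\}}$. System (HQ) in $(\vartheta,w,s)$, $w=(w_p)_{p\in E}$: $\vartheta_k=\sum_{I\in\mathcal{I}_k}c^k_I\sum_{p\in E}(\prod_{i\in I}a_{ip_i})w_p$ for $k\in[\kappa]$; $w\ge0$, $\sum_{p\in E}w_p=1$; $s_i=\sum_{j=0}^nv_{ij}\sum_{p\in E:p_i=j}w_p$ for $i\in[d]$. Ideal formulation: projection onto $(f,\vartheta)$ equals the target set and every extreme point of the continuous relaxation has binary $\delta$. MICP relaxation of the graph: its projection onto $(x,\vartheta)$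 contains $\{(x,\theta(f(x)))\mid x\in X\}$ and its continuous relaxation is convex. *)

theory Defs imports "HOL-Analysis.Analysis" "HOL-Library.Function_Algebras"
begin

text \<open>Vectors of R^k, R^(d x (n+1)), R^E etc. are represented as functions on
  natural-number indices that vanish outside the relevant finite index set.
  To speak about convexity / extreme points we equip functions with the
  pointwise real vector space structure.\<close>

instantiation "fun" :: (type, real_vector) real_vector
begin
definition scaleR_fun :: "real \<Rightarrow> ('a \<Rightarrow> 'b) \<Rightarrow> 'a \<Rightarrow> 'b"
  where "scaleR_fun r f = (\<lambda>x. r *\<^sub>R f x)"
instance
  by standard (auto simp: scaleR_fun_def fun_eq_iff scaleR_add_right scaleR_add_left)
end

definition Eset :: "nat \<Rightarrow> nat \<Rightarrow> (nat \<Rightarrow> nat) set" where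
  "Eset d n = PiE {1..d} (\<lambda>_. {0..n})"

definition theta_map :: "nat \<Rightarrow> (nat \<Rightarrow> nat set set) \<Rightarrow> (nat \<Rightarrow> nat set \<Rightarrow> real)
    \<Rightarrow> (nat \<Rightarrow> real) \<Rightarrow> (nat \<Rightarrow> real)" where
  "theta_map \<kappa> \<I> c f = (\<lambda>k. if k \<in> {1..\<kappa>} then (\<Sum>I\<in>\<I> k. c k I * (\<Prod>i\<in>I. f i)) else 0)"

definition box :: "nat \<Rightarrow> (nat \<Rightarrow> nat \<Rightarrow> real) \<Rightarrow> (nat \<Rightarrow> nat \<Rightarrow> nat) \<Rightarrow> (nat \<Rightarrow> nat)
    \<Rightarrow> (nat \<Rightarrow> real) set" where
  "box d a \<tau> t = {f. (\<forall>i\<in>{1..d}. a i (\<tau> i (t i - 1)) \<le> f i \<and> f i \<le> a i (\<tau> i (t i)))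
                     \<and> (\<forall>i. i \<notin> {1..d} \<longrightarrow> f i = 0)}"

definition Hboxes :: "nat \<Rightarrow> (nat \<Rightarrow> nat \<Rightarrow> real) \<Rightarrow> (nat \<Rightarrow> nat \<Rightarrow> nat) \<Rightarrow> (nat \<Rightarrow> nat)
    \<Rightarrow> (nat \<Rightarrow> real) set set" where
  "Hboxes d a \<tau> l = {box d a \<tau> t | t. t \<in> PiE {1..d} (\<lambda>i. {1..l i})}"

definition target_set :: "nat \<Rightarrow> nat \<Rightarrow> (nat \<Rightarrow> nat set set) \<Rightarrow> (nat \<Rightarrow> nat set \<Rightarrow> real)
    \<Rightarrow> (nat \<Rightarrow> nat \<Rightarrow> real) \<Rightarrow> (nat \<Rightarrow> nat \<Rightarrow> nat) \<Rightarrow> (nat \<Rightarrow> nat)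
    \<Rightarrow> ((nat \<Rightarrow> real) \<times> (nat \<Rightarrow> real)) set" where
  "target_set d \<kappa> \<I> c a \<tau> l =
     (\<Union>H\<in>Hboxes d a \<tau> l. convex hull {(f, theta_map \<kappa> \<I> c f) | f. f \<in> H})"

text \<open>System (HQ) in (vartheta, w, s).  s i k is the k-th component of s_i (k = 0..n);
  the k-th component of v_{ij} is a_{i,min k j}.\<close>
definition HQ :: "nat \<Rightarrow> nat \<Rightarrow> nat \<Rightarrow> (nat \<Rightarrow> nat set set) \<Rightarrow> (nat \<Rightarrow> nat set \<Rightarrow> real)
    \<Rightarrow> (nat \<Rightarrow> nat \<Rightarrow> real) \<Rightarrow> (nat \<Rightarrow> real) \<Rightarrow> ((nat \<Rightarrow> nat) \<Rightarrow> real) \<Rightarrow> (nat \<Rightarrow> nat \<Rightarrow> real)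
    \<Rightarrow> bool" where
  "HQ d n \<kappa> \<I> c a \<theta> w s \<longleftrightarrow>
     (\<forall>k\<in>{1..\<kappa>}. \<theta> k = (\<Sum>I\<in>\<I> k. c k I * (\<Sum>p\<in>Eset d n. (\<Prod>i\<in>I. a i (p i)) * w p)))
   \<and> (\<forall>p\<in>Eset d n. 0 \<le> w p)
   \<and> (\<Sum>p\<in>Eset d n. w p) = 1
   \<and> (\<forall>i\<in>{1..d}. \<forall>k\<in>{0..n}.
        s i k = (\<Sum>j=0..n. a i (min k j) * (\<Sum>p\<in>{p\<in>Eset d n. p i = j}. w p)))"

definition Zmap :: "(nat \<Rightarrow> nat \<Rightarrow> real) \<Rightarrow> (nat \<Rightarrow> nat \<Rightarrow> real) \<Rightarrow> nat \<Rightarrow> nat \<Rightarrow> real" where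
  "Zmap a s = (\<lambda>i j. if j = 0 then 1 else (s i j - s i (j - 1)) / (a i j - a i (j - 1)))"

definition Inc1 :: "bool \<Rightarrow> nat \<Rightarrow> nat \<Rightarrow> (nat \<Rightarrow> nat \<Rightarrow> nat) \<Rightarrow> (nat \<Rightarrow> nat)
    \<Rightarrow> (nat \<Rightarrow> nat \<Rightarrow> real) \<Rightarrow> (nat \<Rightarrow> nat \<Rightarrow> real) \<Rightarrow> bool" where
  "Inc1 bin d n \<tau> l z \<delta> \<longleftrightarrow>
     (\<forall>i\<in>{1..d}.
        z i 0 = 1 \<and> (\<forall>j\<in>{1..n}. z i (j - 1) \<ge> z i j) \<and> z i n \<ge> 0
      \<and> (\<forall>t\<in>{1..l i - 1}.
           (if bin then \<delta> i t \<in> {0, 1} else \<delta> i t \<in> {0..1})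
         \<and> z i (\<tau> i t) \<ge> \<delta> i t \<and> \<delta> i t \<ge> z i (\<tau> i t + 1)))"

definition vars_ok :: "nat \<Rightarrow> nat \<Rightarrow> nat \<Rightarrow> (nat \<Rightarrow> nat)
    \<Rightarrow> (nat \<Rightarrow> real) \<Rightarrow> ((nat \<Rightarrow> nat) \<Rightarrow> real) \<Rightarrow> (nat \<Rightarrow> nat \<Rightarrow> real) \<Rightarrow> (nat \<Rightarrow> nat \<Rightarrow> real)
    \<Rightarrow> bool" where
  "vars_ok d n \<kappa> l \<theta> w s \<delta> \<longleftrightarrow>
     (\<forall>k. k \<notin> {1..\<kappa>} \<longrightarrow> \<theta> k = 0)
   \<and> (\<forall>p. p \<notin> Eset d n \<longrightarrow> w p = 0)
   \<and> (\<forall>i j. \<not> (i \<in> {1..d} \<and> j \<in> {0..n}) \<longrightarrow> s i j = 0)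
   \<and> (\<forall>i t. \<not> (i \<in> {1..d} \<and> t \<in> {1..l i - 1}) \<longrightarrow> \<delta> i t = 0)"

definition formulation :: "bool \<Rightarrow> nat \<Rightarrow> nat \<Rightarrow> nat \<Rightarrow> (nat \<Rightarrow> nat set set)
    \<Rightarrow> (nat \<Rightarrow> nat set \<Rightarrow> real) \<Rightarrow> (nat \<Rightarrow> nat \<Rightarrow> real) \<Rightarrow> (nat \<Rightarrow> nat \<Rightarrow> nat) \<Rightarrow> (nat \<Rightarrow> nat)
    \<Rightarrow> ((nat \<Rightarrow> real) \<times> ((nat \<Rightarrow> nat) \<Rightarrow> real) \<times> (nat \<Rightarrow> nat \<Rightarrow> real) \<times> (nat \<Rightarrow> nat \<Rightarrow> real)) set"
  where
  "formulation bin d n \<kappa> \<I> c a \<tau> l =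
     {(\<theta>, w, s, \<delta>). vars_ok d n \<kappa> l \<theta> w s \<delta> \<and> HQ d n \<kappa> \<I> c a \<theta> w s
                      \<and> Inc1 bin d n \<tau> l (Zmap a s) \<delta>}"

definition ideal_formulation :: "nat \<Rightarrow> nat \<Rightarrow> nat \<Rightarrow> (nat \<Rightarrow> nat set set)
    \<Rightarrow> (nat \<Rightarrow> nat set \<Rightarrow> real) \<Rightarrow> (nat \<Rightarrow> nat \<Rightarrow> real) \<Rightarrow> (nat \<Rightarrow> nat \<Rightarrow> nat) \<Rightarrow> (nat \<Rightarrow> nat)
    \<Rightarrow> bool" where
  "ideal_formulation d n \<kappa> \<I> c a \<tau> l \<longleftrightarrow>
     (\<lambda>(\<theta>, w, s, \<delta>). (\<lambda>i. s i n, \<theta>)) ` formulation True d n \<kappa> \<I> c a \<tau> l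
       = target_set d \<kappa> \<I> c a \<tau> l
   \<and> (\<forall>\<theta> w s \<delta>. (\<theta>, w, s, \<delta>) extreme_point_of formulation False d n \<kappa> \<I> c a \<tau> l \<longrightarrow>
        (\<forall>i\<in>{1..d}. \<forall>t\<in>{1..l i - 1}. \<delta> i t \<in> {0, 1}))"

definition ext_formulation :: "bool \<Rightarrow> nat \<Rightarrow> nat \<Rightarrow> nat \<Rightarrow> (nat \<Rightarrow> nat set set)
    \<Rightarrow> (nat \<Rightarrow> nat set \<Rightarrow> real) \<Rightarrow> (nat \<Rightarrow> nat \<Rightarrow> real) \<Rightarrow> (nat \<Rightarrow> nat \<Rightarrow> nat) \<Rightarrow> (nat \<Rightarrow> nat)
    \<Rightarrow> 'x set \<Rightarrow> ('x \<Rightarrow> nat \<Rightarrow> nat \<Rightarrow> real) \<Rightarrow> ('x \<times> (nat \<Rightarrow> real)) set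
    \<Rightarrow> ('x \<times> (nat \<Rightarrow> real) \<times> ((nat \<Rightarrow> nat) \<Rightarrow> real) \<times> (nat \<Rightarrow> nat \<Rightarrow> real) \<times> (nat \<Rightarrow> nat \<Rightarrow> real)) set"
  where
  "ext_formulation bin d n \<kappa> \<I> c a \<tau> l X u W =
     {(x, \<theta>, w, s, \<delta>). (\<theta>, w, s, \<delta>) \<in> formulation bin d n \<kappa> \<I> c a \<tau> l \<and> x \<in> X
        \<and> (\<forall>i\<in>{1..d}. \<forall>j\<in>{0..n}. u x i j \<le> s i j)
        \<and> (x, (\<lambda>i. s i n)) \<in> W}"

definition MICP_relaxation_graph :: "nat \<Rightarrow> nat \<Rightarrow> nat \<Rightarrow> (nat \<Rightarrow> nat set set)
    \<Rightarrow> (nat \<Rightarrow> nat set \<Rightarrow> real) \<Rightarrow> (nat \<Rightarrow> nat \<Rightarrow> real) \<Rightarrow> (nat \<Rightarrow> nat \<Rightarrow> nat) \<Rightarrow> (nat \<Rightarrow> nat)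
    \<Rightarrow> ('x::real_vector) set \<Rightarrow> ('x \<Rightarrow> nat \<Rightarrow> nat \<Rightarrow> real) \<Rightarrow> ('x \<times> (nat \<Rightarrow> real)) set
    \<Rightarrow> ('x \<Rightarrow> nat \<Rightarrow> real) \<Rightarrow> bool" where
  "MICP_relaxation_graph d n \<kappa> \<I> c a \<tau> l X u W f \<longleftrightarrow>
     {(x, theta_map \<kappa> \<I> c (f x)) | x. x \<in> X}
       \<subseteq> (\<lambda>(x, \<theta>, w, s, \<delta>). (x, \<theta>)) ` ext_formulation True d n \<kappa> \<I> c a \<tau> l X u W
   \<and> convex (ext_formulation False d n \<kappa> \<I> c a \<tau> l X u W)"

end

theory Submission
  imports Defs
begin

text \<open>
  A solution of (HQ) is the barycentre of a probability distribution w on the grid E: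
  \<vartheta> and s are the expectations of \<theta>(a_p) and of v_{i,p_i}, and Z(s)_{ij} is the tail
  probability P_w(p_i \<ge> j). Hence (Inc-1) only asks
  P_w(p_i > \<tau>(i,t)) \<le> \<delta>_{it} \<le> P_w(p_i \<ge> \<tau>(i,t)).

  For binary \<delta> these bounds force w to live on a single cell H of the coarse grid \<tau>, so
  (s_{.n}, \<vartheta>) lies in the convex hull of the graph of \<theta> over H. Conversely a point f of H
  is the mean of the product distribution on the vertices of H that interpolates f, and
  multilinearity of \<theta> makes this distribution reproduce \<theta>(f); since the pairs (s_{.n}, \<vartheta>)
  coming from distributions on a fixed cell form a convex set, this gives the projection.

  In the relaxation every \<delta>_{it} is a convex combination of its two tail-probability bounds.
  Splitting w into point masses and the combination weights into 0/1 values writes every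
  feasible point as a convex combination of binary ones, so the extreme points are binary.

  For the MICP claim, the product distribution on the fine cell [a_{ij}, a_{i,j+1}] containing
  f_i(x) gives s_{ik} = min(a_{ik}, f_i(x)) \<ge> u_{ik}(x).
\<close>

lemma ex_convex_combination_real:
  fixes x lo hi :: real
  assumes "lo \<le> x" and "x \<le> hi"
  shows "\<exists>r\<in>{0..1}. x = (1 - r) * lo + r * hi"
proof -
  have "x \<in> closed_segment lo hi"
    using assms closed_segment_eq_real_ivl[of lo hi] by auto
  then show ?thesis
    unfolding closed_segment_def by (auto simp: algebra_simps)
qed

lemma extreme_point_of_mem_generators:
  assumes "convex T" and "S \<subseteq> T" and "T \<subseteq> convex hull S" and "x extreme_point_of T"
  shows "x \<in> S"
proof (rule extreme_point_of_convex_hull)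
  have "convex hull S \<subseteq> T"
    using assms(2,1) by (rule hull_minimal)
  then show "x extreme_point_of convex hull S"
    using assms(3,4) unfolding extreme_point_of_def by blast
qed

lemma sum_apply: "(\<Sum>a\<in>A. f a) x = (\<Sum>a\<in>A. f a x)"
  by (induction A rule: infinite_finite_induct) auto

lemma linear_image_mem_convex_hull_point_masses:
  fixes L :: "('a \<Rightarrow> real) \<Rightarrow> 'b::real_vector"
  assumes "linear L" and "finite A"
    and "\<forall>p. p \<notin> A \<longrightarrow> w p = 0" and "\<forall>p\<in>A. 0 \<le> w p" and "sum w A = 1"
    and "\<And>p. p \<in> A \<Longrightarrow> w p \<noteq> 0 \<Longrightarrow> L (indicator {p}) \<in> S"
  shows "L w \<in> convex hull S"
proof -
  define B where "B = {p\<in>A. w p \<noteq> 0}"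
  have "finite B" using assms(2) unfolding B_def by simp
  have "w = (\<Sum>p\<in>B. w p *\<^sub>R indicator {p})"
  proof
    fix q
    have "(\<Sum>p\<in>B. w p *\<^sub>R indicator {p}) q = (if q \<in> B then w q else 0)"
      using \<open>finite B\<close> by (simp add: sum_apply scaleR_fun_def indicator_def if_distrib cong: if_cong)
    then show "w q = (\<Sum>p\<in>B. w p *\<^sub>R indicator {p}) q"
      using assms(3) unfolding B_def by auto
  qed
  then have "L w = L (\<Sum>p\<in>B. w p *\<^sub>R indicator {p})"
    by (rule arg_cong)
  also have "\<dots> = (\<Sum>p\<in>B. w p *\<^sub>R L (indicator {p}))"
    using assms(1) by (simp add: linear_sum linear_scale)
  also have "\<dots> \<in> convex hull S"
  proof (rule convex_sum)
    have "sum w A = sum w B"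
      using assms(2) unfolding B_def by (intro sum.mono_neutral_right) auto
    then show "sum w B = 1" using assms(5) by simp
    show "\<And>p. p \<in> B \<Longrightarrow> 0 \<le> w p"
      using assms(4) unfolding B_def by blast
    show "\<And>p. p \<in> B \<Longrightarrow> L (indicator {p}) \<in> convex hull S"
      using assms(6) unfolding B_def by (blast intro: hull_inc)
  qed (use \<open>finite B\<close> in simp_all)
  finally show ?thesis .
qed

lemma multiaffine_mem_convex_hull_vertices:
  fixes g :: "('i \<Rightarrow> real) \<Rightarrow> 'a::real_vector"
  assumes "finite D" and "\<forall>i\<in>D. \<rho> i \<in> {0..1}"
    and affine: "\<And>\<rho> i r. i \<in> D \<Longrightarrow> g (\<rho>(i := r)) = (1 - r) *\<^sub>R g (\<rho>(i := 0)) + r *\<^sub>R g (\<rho>(i := 1))"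
  shows "g \<rho> \<in> convex hull g ` {\<rho>'. (\<forall>i\<in>D. \<rho>' i \<in> {0, 1}) \<and> (\<forall>i. i \<notin> D \<longrightarrow> \<rho>' i = \<rho> i)}"
  using assms
proof (induction D arbitrary: \<rho> rule: finite_induct)
  case empty
  show ?case by (intro hull_inc image_eqI[of _ g \<rho>]) simp_all
next
  case (insert x D)
  let ?V = "\<lambda>D \<rho>. {\<rho>'. (\<forall>i\<in>D. \<rho>' i \<in> {0, 1}) \<and> (\<forall>i. i \<notin> D \<longrightarrow> \<rho>' i = \<rho> i)}"
  have vertex: "g (\<rho>(x := b)) \<in> convex hull g ` ?V (insert x D) \<rho>" if "b \<in> {0, 1}" for b
  proof -
    have "g (\<rho>(x := b)) \<in> convex hull g ` ?V D (\<rho>(x := b))"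
    proof (rule insert.IH)
      show "\<forall>i\<in>D. (\<rho>(x := b)) i \<in> {0..1}"
        using insert.prems(1) that by auto
    qed (rule insert.prems(2), simp)
    moreover have "?V D (\<rho>(x := b)) \<subseteq> ?V (insert x D) \<rho>"
      using insert.hyps(2) that by auto
    then have "convex hull g ` ?V D (\<rho>(x := b)) \<subseteq> convex hull g ` ?V (insert x D) \<rho>"
      by (intro hull_mono image_mono)
    ultimately show ?thesis by (rule rev_subsetD)
  qed
  have "g \<rho> = g (\<rho>(x := \<rho> x))" by simp
  also have "\<dots> = (1 - \<rho> x) *\<^sub>R g (\<rho>(x := 0)) + \<rho> x *\<^sub>R g (\<rho>(x := 1))"
    by (rule insert.prems(2)) simp
  also have "\<dots> \<in> convex hull g ` ?V (insert x D) \<rho>"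
    by (intro convexD convex_convex_hull vertex) (use insert.prems(1) in auto)
  finally show ?case .
qed

section \<open>Solutions of (HQ) as distributions on the grid\<close>

locale hq_inc =
  fixes d n \<kappa> :: nat
    and \<I> :: "nat \<Rightarrow> nat set set" and c :: "nat \<Rightarrow> nat set \<Rightarrow> real"
    and a :: "nat \<Rightarrow> nat \<Rightarrow> real"
    and \<tau> :: "nat \<Rightarrow> nat \<Rightarrow> nat" and l :: "nat \<Rightarrow> nat"
  assumes n_pos: "n \<ge> 1"
    and terms_subset: "\<forall>k\<in>{1..\<kappa>}. \<I> k \<subseteq> Pow {1..d}"
    and a_strict_mono: "\<forall>i\<in>{1..d}. strict_mono_on {0..n} (a i)"
    and \<tau>_breakpoints: "\<forall>i\<in>{1..d}. \<tau> i 0 = 0 \<and> \<tau> i (l i) = n \<and> strict_mono_on {0..l i} (\<tau> i)"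
begin

abbreviation "E \<equiv> Eset d n"

abbreviation cells :: "(nat \<Rightarrow> nat) set" where
  "cells \<equiv> PiE {1..d} (\<lambda>i. {1..l i})"

definition \<delta>_index :: "(nat \<times> nat) set" where
  "\<delta>_index = (SIGMA i:{1..d}. {1..l i - 1})"

lemma finite_E: "finite E"
  unfolding Eset_def by (simp add: finite_PiE)

lemma E_le: "p \<in> E \<Longrightarrow> i \<in> {1..d} \<Longrightarrow> p i \<le> n"
  unfolding Eset_def by (auto simp: PiE_def Pi_def)

lemma a_less: "i \<in> {1..d} \<Longrightarrow> j < k \<Longrightarrow> k \<le> n \<Longrightarrow> a i j < a i k"
  using a_strict_mono by (auto simp: strict_mono_on_def)

lemma a_le: "i \<in> {1..d} \<Longrightarrow> j \<le> k \<Longrightarrow> k \<le> n \<Longrightarrow> a i j \<le> a i k"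
  using a_less by (cases "j = k") (auto simp: less_imp_le)

lemma \<tau>_less: "i \<in> {1..d} \<Longrightarrow> s < t \<Longrightarrow> t \<le> l i \<Longrightarrow> \<tau> i s < \<tau> i t"
  using \<tau>_breakpoints by (auto simp: strict_mono_on_def)

lemma \<tau>_le: "i \<in> {1..d} \<Longrightarrow> s \<le> t \<Longrightarrow> t \<le> l i \<Longrightarrow> \<tau> i s \<le> \<tau> i t"
  using \<tau>_less by (cases "s = t") (auto simp: less_imp_le)

lemma \<tau>_0: "i \<in> {1..d} \<Longrightarrow> \<tau> i 0 = 0"
  and \<tau>_last: "i \<in> {1..d} \<Longrightarrow> \<tau> i (l i) = n"
  using \<tau>_breakpoints by auto

lemma \<tau>_le_n: "i \<in> {1..d} \<Longrightarrow> t \<le> l i \<Longrightarrow> \<tau> i t \<le> n"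
  using \<tau>_le[of i t "l i"] \<tau>_last by auto

lemma \<tau>_interior: "i \<in> {1..d} \<Longrightarrow> t \<in> {1..l i - 1} \<Longrightarrow> 1 \<le> \<tau> i t \<and> \<tau> i t < n"
  using \<tau>_less[of i 0 t] \<tau>_less[of i t "l i"] \<tau>_0 \<tau>_last by force

lemma l_pos: "i \<in> {1..d} \<Longrightarrow> 1 \<le> l i"
  using \<tau>_0 \<tau>_last n_pos by (metis not_one_le_zero less_one not_less)

lemma finite_\<delta>_index: "finite \<delta>_index"
  unfolding \<delta>_index_def by simp

lemma theta_map_cong:
  assumes "\<forall>i\<in>{1..d}. f i = g i"
  shows "theta_map \<kappa> \<I> c f = theta_map \<kappa> \<I> c g"
proof -
  have "(\<Prod>i\<in>I. f i) = (\<Prod>i\<in>I. g i)" if "k \<in> {1..\<kappa>}" "I \<in> \<I> k" for k I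
  proof -
    have "I \<subseteq> {1..d}" using that terms_subset by blast
    then show ?thesis using assms by (intro prod.cong) auto
  qed
  then show ?thesis
    unfolding theta_map_def by (intro ext if_cong sum.cong refl) auto
qed

definition grid_point :: "(nat \<Rightarrow> nat) \<Rightarrow> nat \<Rightarrow> real" where
  "grid_point p = (\<lambda>i. if i \<in> {1..d} then a i (p i) else 0)"

definition s_vertex :: "(nat \<Rightarrow> nat) \<Rightarrow> nat \<Rightarrow> nat \<Rightarrow> real" where
  "s_vertex p = (\<lambda>i k. if i \<in> {1..d} \<and> k \<in> {0..n} then a i (min k (p i)) else 0)"

definition mean_theta :: "((nat \<Rightarrow> nat) \<Rightarrow> real) \<Rightarrow> nat \<Rightarrow> real" where
  "mean_theta w = (\<lambda>k. \<Sum>p\<in>E. w p * theta_map \<kappa> \<I> c (grid_point p) k)"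

definition mean_s :: "((nat \<Rightarrow> nat) \<Rightarrow> real) \<Rightarrow> nat \<Rightarrow> nat \<Rightarrow> real" where
  "mean_s w = (\<lambda>i k. \<Sum>p\<in>E. w p * s_vertex p i k)"

definition tail_prob :: "((nat \<Rightarrow> nat) \<Rightarrow> real) \<Rightarrow> nat \<Rightarrow> nat \<Rightarrow> real" where
  "tail_prob w i j = (\<Sum>p\<in>E. w p * (if j \<le> p i then 1 else 0))"

definition is_distribution :: "((nat \<Rightarrow> nat) \<Rightarrow> real) \<Rightarrow> bool" where
  "is_distribution w \<longleftrightarrow> (\<forall>p. p \<notin> E \<longrightarrow> w p = 0) \<and> (\<forall>p\<in>E. 0 \<le> w p) \<and> sum w E = 1"

definition inc_constraints :: "bool \<Rightarrow> ((nat \<Rightarrow> nat) \<Rightarrow> real) \<Rightarrow> (nat \<Rightarrow> nat \<Rightarrow> real) \<Rightarrow> bool" where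
  "inc_constraints bin w \<delta> \<longleftrightarrow> (\<forall>i t. (i, t) \<notin> \<delta>_index \<longrightarrow> \<delta> i t = 0) \<and>
     (\<forall>i\<in>{1..d}. \<forall>t\<in>{1..l i - 1}. (if bin then \<delta> i t \<in> {0, 1} else \<delta> i t \<in> {0..1})
        \<and> tail_prob w i (\<tau> i t + 1) \<le> \<delta> i t \<and> \<delta> i t \<le> tail_prob w i (\<tau> i t))"

lemma theta_map_grid_point:
  assumes "k \<in> {1..\<kappa>}"
  shows "theta_map \<kappa> \<I> c (grid_point p) k = (\<Sum>I\<in>\<I> k. c k I * (\<Prod>i\<in>I. a i (p i)))"
proof -
  have "(\<Prod>i\<in>I. grid_point p i) = (\<Prod>i\<in>I. a i (p i))" if "I \<in> \<I> k" for I
  proof -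
    have "I \<subseteq> {1..d}" using that assms terms_subset by blast
    then show ?thesis unfolding grid_point_def by (intro prod.cong) auto
  qed
  then show ?thesis
    using assms unfolding theta_map_def by simp
qed

lemma tail_prob_bounds:
  assumes "is_distribution w"
  shows "0 \<le> tail_prob w i j" and "tail_prob w i j \<le> 1"
proof -
  show "0 \<le> tail_prob w i j"
    using assms unfolding tail_prob_def is_distribution_def by (auto intro: sum_nonneg)
  have "tail_prob w i j \<le> sum w E"
    using assms unfolding tail_prob_def is_distribution_def by (intro sum_mono) auto
  then show "tail_prob w i j \<le> 1"
    using assms unfolding is_distribution_def by simp
qed

lemma tail_prob_antimono:
  "is_distribution w \<Longrightarrow> j \<le> k \<Longrightarrow> tail_prob w i k \<le> tail_prob w i j"
  unfolding tail_prob_def is_distribution_def by (intro sum_mono) auto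

lemma Zmap_mean_s:
  assumes "i \<in> {1..d}" and "j \<in> {1..n}"
  shows "Zmap a (mean_s w) i j = tail_prob w i j"
proof -
  have "s_vertex p i j - s_vertex p i (j - 1) = (if j \<le> p i then 1 else 0) * (a i j - a i (j - 1))" for p
  proof (cases "j \<le> p i")
    case False
    then have "min j (p i) = p i" and "min (j - 1) (p i) = p i" by auto
    then show ?thesis using assms False by (simp add: s_vertex_def)
  qed (use assms in \<open>auto simp: s_vertex_def\<close>)
  then have "mean_s w i j - mean_s w i (j - 1)
      = (\<Sum>p\<in>E. w p * ((if j \<le> p i then 1 else 0) * (a i j - a i (j - 1))))"
    unfolding mean_s_def by (simp add: sum_subtractf[symmetric] right_diff_distrib[symmetric])
  also have "\<dots> = tail_prob w i j * (a i j - a i (j - 1))"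
    unfolding tail_prob_def by (simp add: sum_distrib_right mult.assoc)
  moreover have "a i (j - 1) < a i j"
    using a_less[of i "j - 1" j] assms by auto
  ultimately show ?thesis
    using assms by (simp add: Zmap_def)
qed

lemma HQ_iff:
  assumes "\<forall>p. p \<notin> E \<longrightarrow> w p = 0"
  shows "HQ d n \<kappa> \<I> c a \<theta> w s \<longleftrightarrow>
     (\<forall>k\<in>{1..\<kappa>}. \<theta> k = mean_theta w k) \<and> (\<forall>p\<in>E. 0 \<le> w p) \<and> sum w E = 1
     \<and> (\<forall>i\<in>{1..d}. \<forall>k\<in>{0..n}. s i k = mean_s w i k)"
proof -
  have theta: "(\<Sum>I\<in>\<I> k. c k I * (\<Sum>p\<in>E. (\<Prod>i\<in>I. a i (p i)) * w p)) = mean_theta w k"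
    if "k \<in> {1..\<kappa>}" for k
    unfolding mean_theta_def theta_map_grid_point[OF that]
    by (simp add: sum_distrib_left sum_distrib_right mult_ac sum.swap[of _ "\<I> k"])
  have s: "(\<Sum>j=0..n. a i (min k j) * (\<Sum>p\<in>{p\<in>E. p i = j}. w p)) = mean_s w i k"
    if "i \<in> {1..d}" "k \<in> {0..n}" for i k
  proof -
    have "(\<Sum>j=0..n. a i (min k j) * (\<Sum>p\<in>{p\<in>E. p i = j}. w p))
        = (\<Sum>j=0..n. (\<Sum>p\<in>{p\<in>E. p i = j}. w p * s_vertex p i k))"
      using that by (auto simp: sum_distrib_left s_vertex_def mult.commute intro!: sum.cong)
    also have "\<dots> = mean_s w i k"
      unfolding mean_s_def by (rule sum.group) (use finite_E E_le that in auto)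
    finally show ?thesis .
  qed
  show ?thesis
    unfolding HQ_def using theta s by auto
qed

lemma Inc1_iff:
  assumes "is_distribution w"
  shows "Inc1 bin d n \<tau> l (Zmap a (mean_s w)) \<delta> \<longleftrightarrow>
    (\<forall>i\<in>{1..d}. \<forall>t\<in>{1..l i - 1}. (if bin then \<delta> i t \<in> {0, 1} else \<delta> i t \<in> {0..1})
        \<and> tail_prob w i (\<tau> i t + 1) \<le> \<delta> i t \<and> \<delta> i t \<le> tail_prob w i (\<tau> i t))"
proof -
  let ?z = "Zmap a (mean_s w)"
  have "?z i (j - 1) \<ge> ?z i j" if i: "i \<in> {1..d}" and j: "j \<in> {1..n}" for i j
  proof (cases "j = 1")
    case True
    then show ?thesis using Zmap_mean_s[OF i j] tail_prob_bounds[OF assms] by (simp add: Zmap_def)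
  next
    case False
    then have "j - 1 \<in> {1..n}" using j by auto
    then show ?thesis
      using Zmap_mean_s[OF i j] Zmap_mean_s[OF i \<open>j - 1 \<in> {1..n}\<close>]
        tail_prob_antimono[OF assms, of "j - 1" j] by simp
  qed
  moreover have "?z i n \<ge> 0" if "i \<in> {1..d}" for i
    using that Zmap_mean_s[of i n] n_pos tail_prob_bounds[OF assms] by auto
  moreover have "?z i (\<tau> i t) = tail_prob w i (\<tau> i t) \<and> ?z i (\<tau> i t + 1) = tail_prob w i (\<tau> i t + 1)"
    if "i \<in> {1..d}" "t \<in> {1..l i - 1}" for i t
    using \<tau>_interior[OF that] Zmap_mean_s that by auto
  ultimately show ?thesis
    unfolding Inc1_def by (auto simp: Zmap_def)
qed

lemma formulation_imp_mean:
  assumes "(\<theta>, w, s, \<delta>) \<in> formulation bin d n \<kappa> \<I> c a \<tau> l"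
  shows "is_distribution w \<and> \<theta> = mean_theta w \<and> s = mean_s w \<and> inc_constraints bin w \<delta>"
proof -
  have vars: "vars_ok d n \<kappa> l \<theta> w s \<delta>" and hq: "HQ d n \<kappa> \<I> c a \<theta> w s"
    and inc: "Inc1 bin d n \<tau> l (Zmap a s) \<delta>"
    using assms unfolding formulation_def by auto
  have w0: "\<forall>p. p \<notin> E \<longrightarrow> w p = 0"
    using vars unfolding vars_ok_def by auto
  note hq' = hq[unfolded HQ_iff[OF w0]]
  have dist: "is_distribution w"
    using w0 hq' unfolding is_distribution_def by auto
  have "\<theta> k = mean_theta w k" for k
    using hq' vars unfolding vars_ok_def
    by (cases "k \<in> {1..\<kappa>}") (auto simp: mean_theta_def theta_map_def)
  moreover have "s i k = mean_s w i k" for i k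
    using hq' vars unfolding vars_ok_def
    by (cases "i \<in> {1..d} \<and> k \<in> {0..n}") (auto simp: mean_s_def s_vertex_def)
  ultimately have eqs: "\<theta> = mean_theta w" "s = mean_s w"
    by (auto simp: fun_eq_iff)
  have "inc_constraints bin w \<delta>"
    unfolding inc_constraints_def
  proof
    show "\<forall>i t. (i, t) \<notin> \<delta>_index \<longrightarrow> \<delta> i t = 0"
      using vars unfolding vars_ok_def \<delta>_index_def by auto
    show "\<forall>i\<in>{1..d}. \<forall>t\<in>{1..l i - 1}. (if bin then \<delta> i t \<in> {0, 1} else \<delta> i t \<in> {0..1})
        \<and> tail_prob w i (\<tau> i t + 1) \<le> \<delta> i t \<and> \<delta> i t \<le> tail_prob w i (\<tau> i t)"
      using inc unfolding eqs(2) Inc1_iff[OF dist] .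
  qed
  with dist eqs show ?thesis by blast
qed

lemma mean_mem_formulation:
  assumes dist: "is_distribution w" and inc: "inc_constraints bin w \<delta>"
  shows "(mean_theta w, w, mean_s w, \<delta>) \<in> formulation bin d n \<kappa> \<I> c a \<tau> l"
proof -
  have w0: "\<forall>p. p \<notin> E \<longrightarrow> w p = 0"
    using dist unfolding is_distribution_def by auto
  have "vars_ok d n \<kappa> l (mean_theta w) w (mean_s w) \<delta>"
    using dist inc unfolding vars_ok_def is_distribution_def inc_constraints_def mean_theta_def
      theta_map_def mean_s_def s_vertex_def \<delta>_index_def by auto
  moreover have "HQ d n \<kappa> \<I> c a (mean_theta w) w (mean_s w)"
    unfolding HQ_iff[OF w0] using dist unfolding is_distribution_def by auto
  moreover have "Inc1 bin d n \<tau> l (Zmap a (mean_s w)) \<delta>"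
    using inc unfolding inc_constraints_def Inc1_iff[OF dist] by blast
  ultimately show ?thesis
    unfolding formulation_def by auto
qed

lemma formulation_iff:
  "(\<theta>, w, s, \<delta>) \<in> formulation bin d n \<kappa> \<I> c a \<tau> l \<longleftrightarrow>
    is_distribution w \<and> \<theta> = mean_theta w \<and> s = mean_s w \<and> inc_constraints bin w \<delta>"
  using formulation_imp_mean mean_mem_formulation by blast

section \<open>Extreme points of the continuous relaxation\<close>

abbreviation "binary_formulation \<equiv> formulation True d n \<kappa> \<I> c a \<tau> l"
abbreviation "relaxed_formulation \<equiv> formulation False d n \<kappa> \<I> c a \<tau> l"

lemma linear_mean_theta: "linear mean_theta"
  by (rule linearI)
    (simp_all add: fun_eq_iff mean_theta_def scaleR_fun_def sum.distrib sum_distrib_left algebra_simps)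

lemma linear_mean_s: "linear mean_s"
  by (rule linearI)
    (simp_all add: fun_eq_iff mean_s_def scaleR_fun_def sum.distrib sum_distrib_left algebra_simps)

lemma tail_prob_convex_combination:
  "tail_prob (u *\<^sub>R w1 + v *\<^sub>R w2) i j = u * tail_prob w1 i j + v * tail_prob w2 i j"
  by (simp add: tail_prob_def scaleR_fun_def sum.distrib sum_distrib_left algebra_simps)

lemma inc_constraints_relax: "inc_constraints True w \<delta> \<Longrightarrow> inc_constraints False w \<delta>"
proof -
  have "x \<in> {0, 1} \<Longrightarrow> x \<in> {0..1::real}" for x by auto
  then show "inc_constraints True w \<delta> \<Longrightarrow> inc_constraints False w \<delta>"
    unfolding inc_constraints_def by (simp only: if_True if_False) blast
qed

lemma binary_subset_relaxed: "binary_formulation \<subseteq> relaxed_formulation"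
  by (auto simp: formulation_iff intro: inc_constraints_relax)

lemma is_distribution_convex_combination:
  assumes "is_distribution w1" and "is_distribution w2" and "0 \<le> u" and "0 \<le> v" and "u + v = 1"
  shows "is_distribution (u *\<^sub>R w1 + v *\<^sub>R w2)"
  using assms unfolding is_distribution_def
  by (auto simp: scaleR_fun_def sum.distrib sum_distrib_left[symmetric])

lemma convex_relaxed_weights:
  "convex {(w, \<delta>). is_distribution w \<and> inc_constraints False w \<delta>}"
proof (rule convexI)
  fix x y and u v :: real
  assume x: "x \<in> {(w, \<delta>). is_distribution w \<and> inc_constraints False w \<delta>}"
    and y: "y \<in> {(w, \<delta>). is_distribution w \<and> inc_constraints False w \<delta>}"
    and uv: "0 \<le> u" "0 \<le> v" "u + v = 1"
  obtain w1 \<delta>1 w2 \<delta>2 where xy: "x = (w1, \<delta>1)" "y = (w2, \<delta>2)" by fastforce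
  define w where "w = u *\<^sub>R w1 + v *\<^sub>R w2"
  define \<delta> where "\<delta> = u *\<^sub>R \<delta>1 + v *\<^sub>R \<delta>2"
  have \<delta>_apply: "\<delta> i t = u * \<delta>1 i t + v * \<delta>2 i t" for i t
    by (simp add: \<delta>_def scaleR_fun_def)
  have tail: "tail_prob w i j = u * tail_prob w1 i j + v * tail_prob w2 i j" for i j
    by (simp add: w_def tail_prob_convex_combination)
  have comb_le: "u * x1 + v * x2 \<le> u * y1 + v * y2" if "x1 \<le> y1" "x2 \<le> y2" for x1 x2 y1 y2 :: real
    using that uv by (intro add_mono mult_left_mono)
  have "is_distribution w"
    using x y uv unfolding xy w_def by (auto intro: is_distribution_convex_combination)
  moreover have "inc_constraints False w \<delta>"
    using x y uv unfolding xy inc_constraints_def \<delta>_apply tail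
    by (auto intro!: comb_le convex_bound_le)
  ultimately show "u *\<^sub>R x + v *\<^sub>R y \<in> {(w, \<delta>). is_distribution w \<and> inc_constraints False w \<delta>}"
    unfolding xy w_def \<delta>_def by simp
qed

lemma convex_relaxed_formulation: "convex relaxed_formulation"
proof -
  let ?lift = "\<lambda>(w, \<delta>). (mean_theta w, w, mean_s w, \<delta>)"
  have lin: "linear ?lift"
    by (rule linearI) (simp_all add: case_prod_beta linear_add[OF linear_mean_theta]
        linear_add[OF linear_mean_s] linear_scale[OF linear_mean_theta] linear_scale[OF linear_mean_s])
  have "relaxed_formulation = ?lift ` {(w, \<delta>). is_distribution w \<and> inc_constraints False w \<delta>}"
    by (auto simp: formulation_iff image_iff)
  with convex_linear_image[OF lin convex_relaxed_weights] show ?thesis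
    by simp
qed

definition interpolated_delta :: "((nat \<Rightarrow> nat) \<Rightarrow> real) \<Rightarrow> (nat \<times> nat \<Rightarrow> real) \<Rightarrow> nat \<Rightarrow> nat \<Rightarrow> real" where
  "interpolated_delta w \<rho> = (\<lambda>i t. if (i, t) \<in> \<delta>_index
     then (1 - \<rho> (i, t)) * tail_prob w i (\<tau> i t + 1) + \<rho> (i, t) * tail_prob w i (\<tau> i t) else 0)"

lemma linear_interpolated_delta: "linear (\<lambda>w. interpolated_delta w \<rho>)"
  by (rule linearI) (simp_all add: fun_eq_iff interpolated_delta_def tail_prob_def scaleR_fun_def
      sum.distrib sum_distrib_left algebra_simps)

lemma interpolated_delta_fun_upd:
  "interpolated_delta w (\<rho>(x := r))
     = (1 - r) *\<^sub>R interpolated_delta w (\<rho>(x := 0)) + r *\<^sub>R interpolated_delta w (\<rho>(x := 1))"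
  by (simp add: fun_eq_iff interpolated_delta_def scaleR_fun_def algebra_simps)

lemma inc_constraints_interpolated_delta:
  assumes dist: "is_distribution w" and \<rho>: "\<forall>x\<in>\<delta>_index. \<rho> x \<in> {0..1}"
  shows "inc_constraints False w (interpolated_delta w \<rho>)"
  unfolding inc_constraints_def if_False
proof (intro conjI allI impI ballI)
  fix i t assume "(i, t) \<notin> \<delta>_index"
  then show "interpolated_delta w \<rho> i t = 0"
    by (simp add: interpolated_delta_def)
next
  fix i t assume "i \<in> {1..d}" and "t \<in> {1..l i - 1}"
  then have it: "(i, t) \<in> \<delta>_index" by (simp add: \<delta>_index_def)
  define lo where "lo = tail_prob w i (\<tau> i t + 1)"
  define hi where "hi = tail_prob w i (\<tau> i t)"
  have "lo \<le> hi" "0 \<le> lo" "hi \<le> 1"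
    unfolding lo_def hi_def using tail_prob_antimono[OF dist] tail_prob_bounds[OF dist] by auto
  moreover have "0 \<le> \<rho> (i, t)" "\<rho> (i, t) \<le> 1" using \<rho> it by auto
  ultimately have "lo \<le> (1 - \<rho> (i, t)) * lo + \<rho> (i, t) * hi" "(1 - \<rho> (i, t)) * lo + \<rho> (i, t) * hi \<le> hi"
    using mult_left_mono[of lo hi "\<rho> (i, t)"] mult_left_mono[of lo hi "1 - \<rho> (i, t)"]
    by (simp_all add: algebra_simps)
  with \<open>0 \<le> lo\<close> \<open>hi \<le> 1\<close> show "interpolated_delta w \<rho> i t \<in> {0..1}"
    and "tail_prob w i (\<tau> i t + 1) \<le> interpolated_delta w \<rho> i t"
    and "interpolated_delta w \<rho> i t \<le> tail_prob w i (\<tau> i t)"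
    using it unfolding interpolated_delta_def lo_def[symmetric] hi_def[symmetric] by auto
qed

lemma ex_interpolated_delta:
  assumes "inc_constraints False w \<delta>"
  shows "\<exists>\<rho>. (\<forall>x\<in>\<delta>_index. \<rho> x \<in> {0..1}) \<and> \<delta> = interpolated_delta w \<rho>"
proof -
  have "\<forall>x\<in>\<delta>_index. \<exists>r. r \<in> {0..1} \<and> \<delta> (fst x) (snd x)
      = (1 - r) * tail_prob w (fst x) (\<tau> (fst x) (snd x) + 1) + r * tail_prob w (fst x) (\<tau> (fst x) (snd x))"
  proof
    fix x assume "x \<in> \<delta>_index"
    then obtain i t where x: "x = (i, t)" "i \<in> {1..d}" "t \<in> {1..l i - 1}"
      unfolding \<delta>_index_def by blast
    then have "tail_prob w i (\<tau> i t + 1) \<le> \<delta> i t" "\<delta> i t \<le> tail_prob w i (\<tau> i t)"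
      using assms unfolding inc_constraints_def by auto
    from ex_convex_combination_real[OF this] show "\<exists>r. r \<in> {0..1} \<and> \<delta> (fst x) (snd x)
      = (1 - r) * tail_prob w (fst x) (\<tau> (fst x) (snd x) + 1) + r * tail_prob w (fst x) (\<tau> (fst x) (snd x))"
      unfolding x by auto
  qed
  from bchoice[OF this] obtain \<rho> where \<rho>: "\<forall>x\<in>\<delta>_index. \<rho> x \<in> {0..1} \<and>
      \<delta> (fst x) (snd x) = (1 - \<rho> x) * tail_prob w (fst x) (\<tau> (fst x) (snd x) + 1)
        + \<rho> x * tail_prob w (fst x) (\<tau> (fst x) (snd x))"
    by blast
  moreover have "\<delta> = interpolated_delta w \<rho>"
    using \<rho> assms unfolding inc_constraints_def interpolated_delta_def fun_eq_iff by auto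
  ultimately show ?thesis by auto
qed

lemma is_distribution_indicator: "p \<in> E \<Longrightarrow> is_distribution (indicator {p})"
  unfolding is_distribution_def using finite_E by (auto simp: indicator_def)

lemma tail_prob_indicator:
  assumes "p \<in> E"
  shows "tail_prob (indicator {p}) i j = (if j \<le> p i then 1 else 0)"
proof -
  have "tail_prob (indicator {p}) i j = (\<Sum>q\<in>E. if q = p then (if j \<le> q i then 1 else 0) else 0)"
    unfolding tail_prob_def by (intro sum.cong) auto
  then show ?thesis
    using assms finite_E by simp
qed

lemma point_mass_mem_convex_hull_binary:
  assumes "p \<in> E" and "\<forall>x\<in>\<delta>_index. \<rho> x \<in> {0..1}"
  shows "(mean_theta (indicator {p}), indicator {p}, mean_s (indicator {p}),
      interpolated_delta (indicator {p}) \<rho>) \<in> convex hull binary_formulation"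
proof -
  let ?g = "\<lambda>\<rho>. (mean_theta (indicator {p}), indicator {p}, mean_s (indicator {p}),
      interpolated_delta (indicator {p}) \<rho>)"
  let ?V = "{\<rho>'. (\<forall>x\<in>\<delta>_index. \<rho>' x \<in> {0, 1}) \<and> (\<forall>x. x \<notin> \<delta>_index \<longrightarrow> \<rho>' x = \<rho> x)}"
  have "?g \<rho> \<in> convex hull ?g ` ?V"
  proof (rule multiaffine_mem_convex_hull_vertices[where g = ?g, OF finite_\<delta>_index assms(2)])
    fix \<rho> x and r :: real
    show "?g (\<rho>(x := r)) = (1 - r) *\<^sub>R ?g (\<rho>(x := 0)) + r *\<^sub>R ?g (\<rho>(x := 1))"
      by (subst interpolated_delta_fun_upd) (simp add: scaleR_add_left[symmetric])
  qed
  moreover have "?g ` ?V \<subseteq> binary_formulation"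
  proof clarify
    fix \<rho>' :: "nat \<times> nat \<Rightarrow> real" assume \<rho>': "\<forall>x\<in>\<delta>_index. \<rho>' x \<in> {0, 1}"
    have "inc_constraints False (indicator {p}) (interpolated_delta (indicator {p}) \<rho>')"
      using \<rho>' by (intro inc_constraints_interpolated_delta is_distribution_indicator assms(1)) auto
    moreover have "interpolated_delta (indicator {p}) \<rho>' i t \<in> {0, 1}" if "(i, t) \<in> \<delta>_index" for i t
      using \<rho>' that assms(1) by (auto simp: interpolated_delta_def tail_prob_indicator)
    ultimately have "inc_constraints True (indicator {p}) (interpolated_delta (indicator {p}) \<rho>')"
      unfolding inc_constraints_def \<delta>_index_def by auto
    then show "?g \<rho>' \<in> binary_formulation"
      by (simp add: formulation_iff is_distribution_indicator assms(1))
  qed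
  then have "convex hull ?g ` ?V \<subseteq> convex hull binary_formulation"
    by (rule hull_mono)
  ultimately show ?thesis
    by (rule rev_subsetD)
qed

lemma relaxed_subset_convex_hull_binary: "relaxed_formulation \<subseteq> convex hull binary_formulation"
proof clarify
  fix \<theta> w s \<delta> assume "(\<theta>, w, s, \<delta>) \<in> relaxed_formulation"
  then have dist: "is_distribution w" and eqs: "\<theta> = mean_theta w" "s = mean_s w"
    and inc: "inc_constraints False w \<delta>"
    by (auto simp: formulation_iff)
  obtain \<rho> where \<rho>: "\<forall>x\<in>\<delta>_index. \<rho> x \<in> {0..1}" and \<delta>: "\<delta> = interpolated_delta w \<rho>"
    using ex_interpolated_delta[OF inc] by blast
  let ?L = "\<lambda>w. (mean_theta w, w, mean_s w, interpolated_delta w \<rho>)"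
  have lin: "linear ?L"
    by (rule linearI) (simp_all add: linear_add[OF linear_mean_theta] linear_add[OF linear_mean_s]
        linear_add[OF linear_interpolated_delta] linear_scale[OF linear_mean_theta]
        linear_scale[OF linear_mean_s] linear_scale[OF linear_interpolated_delta])
  have w: "\<forall>p. p \<notin> E \<longrightarrow> w p = 0" "\<forall>p\<in>E. 0 \<le> w p" "sum w E = 1"
    using dist unfolding is_distribution_def by auto
  have vertices: "?L (indicator {p}) \<in> convex hull binary_formulation" if "p \<in> E" "w p \<noteq> 0" for p
    by (rule point_mass_mem_convex_hull_binary[OF that(1) \<rho>])
  have "?L w \<in> convex hull (convex hull binary_formulation)"
    by (rule linear_image_mem_convex_hull_point_masses[OF lin finite_E w vertices])
  then show "(\<theta>, w, s, \<delta>) \<in> convex hull binary_formulation"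
    by (simp only: eqs \<delta> hull_hull)
qed

lemma extreme_point_of_relaxed_formulation:
  "x extreme_point_of relaxed_formulation \<Longrightarrow> x \<in> binary_formulation"
  using convex_relaxed_formulation binary_subset_relaxed relaxed_subset_convex_hull_binary
  by (rule extreme_point_of_mem_generators)

section \<open>Projection onto the graph of \<open>\<theta>\<close> over the boxes\<close>

lemma mean_theta_indicator:
  "p \<in> E \<Longrightarrow> mean_theta (indicator {p}) = theta_map \<kappa> \<I> c (grid_point p)"
  unfolding mean_theta_def fun_eq_iff using finite_E
  by (simp add: indicator_def if_distrib sum.If_cases cong: if_cong)

lemma mean_s_indicator: "p \<in> E \<Longrightarrow> mean_s (indicator {p}) = s_vertex p"
  unfolding mean_s_def fun_eq_iff using finite_E
  by (simp add: indicator_def if_distrib sum.If_cases cong: if_cong)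

lemma s_vertex_last: "p \<in> E \<Longrightarrow> (\<lambda>i. s_vertex p i n) = grid_point p"
  using E_le by (auto simp: fun_eq_iff s_vertex_def grid_point_def min_absorb2)

lemma tail_prob_eq_0_iff:
  assumes "is_distribution w"
  shows "tail_prob w i j = 0 \<longleftrightarrow> (\<forall>p\<in>E. w p \<noteq> 0 \<longrightarrow> p i < j)"
proof -
  have "tail_prob w i j = 0 \<longleftrightarrow> (\<forall>p\<in>E. w p * (if j \<le> p i then 1 else 0) = 0)"
    unfolding tail_prob_def using assms finite_E
    by (intro sum_nonneg_eq_0_iff) (auto simp: is_distribution_def)
  then show ?thesis by auto
qed

lemma tail_prob_eq_1_iff:
  assumes "is_distribution w"
  shows "tail_prob w i j = 1 \<longleftrightarrow> (\<forall>p\<in>E. w p \<noteq> 0 \<longrightarrow> j \<le> p i)"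
proof -
  have "1 - tail_prob w i j = sum w E - tail_prob w i j"
    using assms unfolding is_distribution_def by simp
  also have "\<dots> = (\<Sum>p\<in>E. w p * (if j \<le> p i then 0 else 1))"
    unfolding tail_prob_def sum_subtractf[symmetric] by (intro sum.cong) auto
  also have "\<dots> = 0 \<longleftrightarrow> (\<forall>p\<in>E. w p * (if j \<le> p i then 0 else 1) = 0)"
    using assms finite_E by (intro sum_nonneg_eq_0_iff) (auto simp: is_distribution_def)
  finally show ?thesis by auto
qed

definition supported_in_cell :: "(nat \<Rightarrow> nat) \<Rightarrow> ((nat \<Rightarrow> nat) \<Rightarrow> real) \<Rightarrow> bool" where
  "supported_in_cell t w \<longleftrightarrow>
     (\<forall>p\<in>E. w p \<noteq> 0 \<longrightarrow> (\<forall>i\<in>{1..d}. \<tau> i (t i - 1) \<le> p i \<and> p i \<le> \<tau> i (t i)))"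

definition cell_delta :: "(nat \<Rightarrow> nat) \<Rightarrow> nat \<Rightarrow> nat \<Rightarrow> real" where
  "cell_delta t = (\<lambda>i t'. if (i, t') \<in> \<delta>_index \<and> t' < t i then 1 else 0)"

definition cell_graph :: "(nat \<Rightarrow> nat) \<Rightarrow> ((nat \<Rightarrow> real) \<times> (nat \<Rightarrow> real)) set" where
  "cell_graph t = {(f, theta_map \<kappa> \<I> c f) | f. f \<in> box d a \<tau> t}"

lemma support_le_if_delta_eq_0:
  assumes dist: "is_distribution w" and inc: "inc_constraints bin w \<delta>"
    and it: "i \<in> {1..d}" "t \<in> {1..l i - 1}" and "\<delta> i t = 0" and p: "p \<in> E" "w p \<noteq> 0"
  shows "p i \<le> \<tau> i t"
proof -
  have "tail_prob w i (\<tau> i t + 1) \<le> \<delta> i t"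
    using inc it unfolding inc_constraints_def by blast
  then have "tail_prob w i (\<tau> i t + 1) = 0"
    using \<open>\<delta> i t = 0\<close> tail_prob_bounds(1)[OF dist, of i "\<tau> i t + 1"] by linarith
  then show ?thesis using p tail_prob_eq_0_iff[OF dist] by fastforce
qed

lemma support_ge_if_delta_eq_1:
  assumes dist: "is_distribution w" and inc: "inc_constraints bin w \<delta>"
    and it: "i \<in> {1..d}" "t \<in> {1..l i - 1}" and "\<delta> i t = 1" and p: "p \<in> E" "w p \<noteq> 0"
  shows "\<tau> i t \<le> p i"
proof -
  have "\<delta> i t \<le> tail_prob w i (\<tau> i t)"
    using inc it unfolding inc_constraints_def by blast
  then have "tail_prob w i (\<tau> i t) = 1"
    using \<open>\<delta> i t = 1\<close> tail_prob_bounds(2)[OF dist, of i "\<tau> i t"] by linarith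
  then show ?thesis using p tail_prob_eq_1_iff[OF dist] by blast
qed

lemma binary_supported_in_cell:
  assumes "(\<theta>, w, s, \<delta>) \<in> binary_formulation"
  shows "\<exists>t\<in>cells. supported_in_cell t w"
proof -
  have dist: "is_distribution w" and inc: "inc_constraints True w \<delta>"
    using assms by (auto simp: formulation_iff)
  define P where "P i t \<longleftrightarrow> 1 \<le> t \<and> (t = l i \<or> \<delta> i t = 0)" for i t
  define t where "t = (\<lambda>i\<in>{1..d}. LEAST t. P i t)"
  have t: "P i (t i)" "t i \<le> l i" "\<And>s. s < t i \<Longrightarrow> \<not> P i s" if "i \<in> {1..d}" for i
  proof -
    have last: "P i (l i)" using l_pos[OF that] unfolding P_def by simp
    have ti: "t i = (LEAST t. P i t)" using that by (simp add: t_def)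
    show "P i (t i)" unfolding ti using last by (rule LeastI)
    show "t i \<le> l i" unfolding ti using last by (rule Least_le)
    show "\<not> P i s" if "s < t i" for s using that unfolding ti by (rule not_less_Least)
  qed
  have "t \<in> extensional {1..d}" unfolding t_def by simp
  then have "t \<in> cells"
    using t(1,2) unfolding P_def by (auto simp: PiE_iff)
  moreover have "supported_in_cell t w"
    unfolding supported_in_cell_def
  proof (intro ballI impI)
    fix p i assume p: "p \<in> E" "w p \<noteq> 0" and i: "i \<in> {1..d}"
    have "p i \<le> \<tau> i (t i)"
      using t(1,2)[OF i] support_le_if_delta_eq_0[OF dist inc i _ _ p] E_le[OF p(1) i] \<tau>_last[OF i]
      unfolding P_def by (cases "t i = l i") auto
    moreover have "\<tau> i (t i - 1) \<le> p i"
    proof (cases "t i = 1")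
      case False
      then have "\<not> P i (t i - 1)" and it: "t i - 1 \<in> {1..l i - 1}"
        using t[OF i] unfolding P_def by auto
      moreover have "\<delta> i (t i - 1) \<in> {0, 1}"
        using inc i it unfolding inc_constraints_def if_True by blast
      ultimately have "\<delta> i (t i - 1) = 1"
        unfolding P_def using False by auto
      then show ?thesis by (rule support_ge_if_delta_eq_1[OF dist inc i it _ p])
    qed (use \<tau>_0[OF i] in simp)
    ultimately show "\<tau> i (t i - 1) \<le> p i \<and> p i \<le> \<tau> i (t i)" by simp
  qed
  ultimately show ?thesis by blast
qed

lemma supported_in_cell_convex_combination:
  assumes "supported_in_cell t w1" and "supported_in_cell t w2"
  shows "supported_in_cell t (u *\<^sub>R w1 + v *\<^sub>R w2)"
  using assms unfolding supported_in_cell_def by (auto simp: scaleR_fun_def)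

lemma cell_delta_mem_binary:
  assumes t: "t \<in> cells" and dist: "is_distribution w" and supp: "supported_in_cell t w"
  shows "(mean_theta w, w, mean_s w, cell_delta t) \<in> binary_formulation"
proof -
  have "tail_prob w i (\<tau> i t' + 1) \<le> cell_delta t i t' \<and> cell_delta t i t' \<le> tail_prob w i (\<tau> i t')"
    if i: "i \<in> {1..d}" and t': "t' \<in> {1..l i - 1}" for i t'
  proof (cases "t' < t i")
    case True
    have "t i \<le> l i" using t i by (auto simp: PiE_iff)
    then have "\<tau> i t' \<le> \<tau> i (t i - 1)" using \<tau>_le[OF i, of t' "t i - 1"] True by auto
    then have "tail_prob w i (\<tau> i t') = 1"
      using supp i unfolding tail_prob_eq_1_iff[OF dist] supported_in_cell_def by force
    then show ?thesis
      using True i t' tail_prob_bounds[OF dist] by (simp add: cell_delta_def \<delta>_index_def)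
  next
    case False
    have "\<tau> i (t i) \<le> \<tau> i t'" using \<tau>_le[OF i, of "t i" t'] False t' by auto
    then have "tail_prob w i (\<tau> i t' + 1) = 0"
      using supp i unfolding tail_prob_eq_0_iff[OF dist] supported_in_cell_def by force
    then show ?thesis
      using False tail_prob_bounds[OF dist] by (simp add: cell_delta_def)
  qed
  then have "inc_constraints True w (cell_delta t)"
    unfolding inc_constraints_def by (auto simp: cell_delta_def)
  then show ?thesis
    using dist by (simp add: formulation_iff)
qed

lemma grid_point_mem_box:
  assumes "t \<in> cells" and "p \<in> E" and "\<forall>i\<in>{1..d}. \<tau> i (t i - 1) \<le> p i \<and> p i \<le> \<tau> i (t i)"
  shows "grid_point p \<in> box d a \<tau> t"
  unfolding box_def grid_point_def
proof (intro CollectI conjI ballI allI impI)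
  fix i assume i: "i \<in> {1..d}"
  have "\<tau> i (t i) \<le> n" using assms(1) i by (intro \<tau>_le_n) auto
  then show "a i (\<tau> i (t i - 1)) \<le> (if i \<in> {1..d} then a i (p i) else 0)"
    and "(if i \<in> {1..d} then a i (p i) else 0) \<le> a i (\<tau> i (t i))"
    using assms(3) i a_le[OF i] E_le[OF assms(2) i] by auto
qed auto

lemma linear_mean_projection: "linear (\<lambda>w. ((\<lambda>i. mean_s w i n), mean_theta w))"
  by (rule linearI) (simp_all add: fun_eq_iff mean_s_def mean_theta_def scaleR_fun_def
      sum.distrib sum_distrib_left algebra_simps)

lemma supported_mem_convex_hull_cell_graph:
  assumes t: "t \<in> cells" and dist: "is_distribution w" and supp: "supported_in_cell t w"
  shows "((\<lambda>i. mean_s w i n), mean_theta w) \<in> convex hull cell_graph t"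
proof -
  let ?L = "\<lambda>w. ((\<lambda>i. mean_s w i n), mean_theta w)"
  have w: "\<forall>p. p \<notin> E \<longrightarrow> w p = 0" "\<forall>p\<in>E. 0 \<le> w p" "sum w E = 1"
    using dist unfolding is_distribution_def by auto
  have vertices: "?L (indicator {p}) \<in> cell_graph t" if "p \<in> E" "w p \<noteq> 0" for p
  proof -
    have "grid_point p \<in> box d a \<tau> t"
      using supp that by (intro grid_point_mem_box[OF t]) (auto simp: supported_in_cell_def)
    then show ?thesis
      unfolding cell_graph_def mean_s_indicator[OF that(1)] mean_theta_indicator[OF that(1)]
        s_vertex_last[OF that(1)] by blast
  qed
  show ?thesis
    by (rule linear_image_mem_convex_hull_point_masses[OF linear_mean_projection finite_E w vertices])
qed

definition product_dist :: "(nat \<Rightarrow> nat) \<Rightarrow> (nat \<Rightarrow> nat) \<Rightarrow> (nat \<Rightarrow> real) \<Rightarrow> (nat \<Rightarrow> nat) \<Rightarrow> real" where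
  "product_dist lo hi \<mu> p = (if p \<in> E then
     (\<Prod>i\<in>{1..d}. if p i = lo i then 1 - \<mu> i else if p i = hi i then \<mu> i else 0) else 0)"

lemma expectation_product_dist:
  assumes "\<forall>i\<in>{1..d}. lo i < hi i \<and> hi i \<le> n"
  shows "(\<Sum>p\<in>E. product_dist lo hi \<mu> p * (\<Prod>i\<in>{1..d}. g i (p i)))
    = (\<Prod>i\<in>{1..d}. (1 - \<mu> i) * g i (lo i) + \<mu> i * g i (hi i))"
proof -
  have "(\<Sum>p\<in>E. product_dist lo hi \<mu> p * (\<Prod>i\<in>{1..d}. g i (p i)))
      = (\<Sum>p\<in>E. \<Prod>i\<in>{1..d}. (if p i = lo i then 1 - \<mu> i else if p i = hi i then \<mu> i else 0) * g i (p i))"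
    unfolding product_dist_def by (intro sum.cong refl) (simp add: prod.distrib)
  also have "\<dots> = (\<Prod>i\<in>{1..d}. \<Sum>j\<in>{0..n}.
      (if j = lo i then 1 - \<mu> i else if j = hi i then \<mu> i else 0) * g i j)"
    unfolding Eset_def by (rule prod_sum_PiE[symmetric]) auto
  also have "\<dots> = (\<Prod>i\<in>{1..d}. (1 - \<mu> i) * g i (lo i) + \<mu> i * g i (hi i))"
  proof (intro prod.cong refl)
    fix i assume "i \<in> {1..d}"
    then have "lo i < hi i" "hi i \<le> n" using assms by blast+
    then have "(if j = lo i then 1 - \<mu> i else if j = hi i then \<mu> i else 0) * g i j
        = (if j = lo i then (1 - \<mu> i) * g i (lo i) else 0) + (if j = hi i then \<mu> i * g i (hi i) else 0)"
      for j by auto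
    then show "(\<Sum>j\<in>{0..n}. (if j = lo i then 1 - \<mu> i else if j = hi i then \<mu> i else 0) * g i j)
        = (1 - \<mu> i) * g i (lo i) + \<mu> i * g i (hi i)"
      using \<open>lo i < hi i\<close> \<open>hi i \<le> n\<close> by (simp add: sum.distrib)
  qed
  finally show ?thesis .
qed

lemma is_distribution_product_dist:
  assumes "\<forall>i\<in>{1..d}. lo i < hi i \<and> hi i \<le> n" and "\<forall>i\<in>{1..d}. \<mu> i \<in> {0..1}"
  shows "is_distribution (product_dist lo hi \<mu>)"
  using assms expectation_product_dist[OF assms(1), of \<mu> "\<lambda>_ _. 1"]
  unfolding is_distribution_def product_dist_def by (auto intro!: prod_nonneg)

lemma product_dist_support:
  "product_dist lo hi \<mu> p \<noteq> 0 \<Longrightarrow> i \<in> {1..d} \<Longrightarrow> p i = lo i \<or> p i = hi i"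
  unfolding product_dist_def by (auto split: if_splits)

lemma mean_s_product_dist:
  assumes "\<forall>i\<in>{1..d}. lo i < hi i \<and> hi i \<le> n" and i: "i \<in> {1..d}" and k: "k \<le> n"
  shows "mean_s (product_dist lo hi \<mu>) i k = (1 - \<mu> i) * a i (min k (lo i)) + \<mu> i * a i (min k (hi i))"
proof -
  have "mean_s (product_dist lo hi \<mu>) i k
      = (\<Sum>p\<in>E. product_dist lo hi \<mu> p * (\<Prod>i'\<in>{1..d}. if i' = i then a i (min k (p i')) else 1))"
    unfolding mean_s_def s_vertex_def using i k by (simp add: prod.delta)
  also have "\<dots> = (1 - \<mu> i) * a i (min k (lo i)) + \<mu> i * a i (min k (hi i))"
    unfolding expectation_product_dist[OF assms(1), of \<mu> "\<lambda>i' j. if i' = i then a i (min k j) else 1"]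
    using i by (simp add: if_distrib prod.delta cong: if_cong)
  finally show ?thesis .
qed

text \<open>This is where multilinearity of \<open>\<theta>\<close> enters.\<close>

lemma mean_theta_product_dist:
  assumes "\<forall>i\<in>{1..d}. lo i < hi i \<and> hi i \<le> n"
  shows "mean_theta (product_dist lo hi \<mu>)
    = theta_map \<kappa> \<I> c (\<lambda>i. (1 - \<mu> i) * a i (lo i) + \<mu> i * a i (hi i))"
proof
  fix k
  let ?w = "product_dist lo hi \<mu>" and ?f = "\<lambda>i. (1 - \<mu> i) * a i (lo i) + \<mu> i * a i (hi i)"
  show "mean_theta ?w k = theta_map \<kappa> \<I> c ?f k"
  proof (cases "k \<in> {1..\<kappa>}")
    case True
    have "(\<Sum>p\<in>E. ?w p * (\<Prod>i\<in>I. a i (p i))) = (\<Prod>i\<in>I. ?f i)" if "I \<in> \<I> k" for I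
    proof -
      have I: "I \<subseteq> {1..d}" using that True terms_subset by blast
      then have "(\<Sum>p\<in>E. ?w p * (\<Prod>i\<in>I. a i (p i)))
          = (\<Sum>p\<in>E. ?w p * (\<Prod>i\<in>{1..d}. if i \<in> I then a i (p i) else 1))"
        by (simp add: prod.inter_restrict[symmetric] Int_absorb1)
      also have "\<dots> = (\<Prod>i\<in>{1..d}. if i \<in> I then ?f i else 1)"
        unfolding expectation_product_dist[OF assms, of \<mu> "\<lambda>i j. if i \<in> I then a i j else 1"]
        by (intro prod.cong) auto
      also have "\<dots> = (\<Prod>i\<in>I. ?f i)"
        using I by (simp add: prod.inter_restrict[symmetric] Int_absorb1)
      finally show ?thesis .
    qed
    moreover have "mean_theta ?w k = (\<Sum>I\<in>\<I> k. c k I * (\<Sum>p\<in>E. ?w p * (\<Prod>i\<in>I. a i (p i))))"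
      unfolding mean_theta_def theta_map_grid_point[OF True] sum_distrib_left
      by (subst sum.swap) (simp add: mult_ac)
    ultimately show ?thesis
      using True by (simp add: theta_map_def)
  qed (auto simp: mean_theta_def theta_map_def)
qed

lemma ex_interpolating_distribution:
  assumes "\<forall>i\<in>{1..d}. lo i < hi i \<and> hi i \<le> n \<and> a i (lo i) \<le> f i \<and> f i \<le> a i (hi i)"
  shows "\<exists>w. is_distribution w \<and> (\<forall>p\<in>E. w p \<noteq> 0 \<longrightarrow> (\<forall>i\<in>{1..d}. p i = lo i \<or> p i = hi i))
    \<and> (\<forall>i\<in>{1..d}. \<forall>k\<le>n. (k \<le> lo i \<longrightarrow> mean_s w i k = a i k) \<and> (hi i \<le> k \<longrightarrow> mean_s w i k = f i))
    \<and> mean_theta w = theta_map \<kappa> \<I> c f"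
proof -
  have lohi: "\<forall>i\<in>{1..d}. lo i < hi i \<and> hi i \<le> n" using assms by blast
  have "\<forall>i\<in>{1..d}. \<exists>r. r \<in> {0..1} \<and> f i = (1 - r) * a i (lo i) + r * a i (hi i)"
    using assms ex_convex_combination_real by blast
  from bchoice[OF this] obtain \<mu> where \<mu>: "\<forall>i\<in>{1..d}. \<mu> i \<in> {0..1}"
    and f: "\<forall>i\<in>{1..d}. f i = (1 - \<mu> i) * a i (lo i) + \<mu> i * a i (hi i)"
    by blast
  let ?w = "product_dist lo hi \<mu>"
  have "(k \<le> lo i \<longrightarrow> mean_s ?w i k = a i k) \<and> (hi i \<le> k \<longrightarrow> mean_s ?w i k = f i)"
    if i: "i \<in> {1..d}" and k: "k \<le> n" for i k
  proof -
    have "lo i < hi i" using lohi i by blast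
    then show ?thesis
      using mean_s_product_dist[OF lohi i k, where \<mu> = \<mu>] f[rule_format, OF i]
      by (auto simp: min_absorb1 min_absorb2 algebra_simps)
  qed
  moreover have "mean_theta ?w = theta_map \<kappa> \<I> c f"
    unfolding mean_theta_product_dist[OF lohi] using f by (intro theta_map_cong) auto
  ultimately show ?thesis
    using is_distribution_product_dist[OF lohi \<mu>] product_dist_support by blast
qed

lemma mean_s_outside: "i \<notin> {1..d} \<Longrightarrow> mean_s w i k = 0"
  by (auto simp: mean_s_def s_vertex_def)

lemma box_point_ex_supported_distribution:
  assumes t: "t \<in> cells" and f: "f \<in> box d a \<tau> t"
  shows "\<exists>w. is_distribution w \<and> supported_in_cell t w
    \<and> (\<lambda>i. mean_s w i n) = f \<and> mean_theta w = theta_map \<kappa> \<I> c f"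
proof -
  have "\<tau> i (t i - 1) < \<tau> i (t i) \<and> \<tau> i (t i) \<le> n
      \<and> a i (\<tau> i (t i - 1)) \<le> f i \<and> f i \<le> a i (\<tau> i (t i))" (is "?cell i")
    if i: "i \<in> {1..d}" for i
  proof -
    have "t i \<in> {1..l i}" using t i by (auto simp: PiE_iff)
    then show ?thesis using f i \<tau>_less[OF i, of "t i - 1" "t i"] \<tau>_le_n[OF i, of "t i"]
      unfolding box_def by auto
  qed
  then have cell: "\<forall>i\<in>{1..d}. ?cell i" by blast
  obtain w where w: "is_distribution w"
    and supp: "\<forall>p\<in>E. w p \<noteq> 0 \<longrightarrow> (\<forall>i\<in>{1..d}. p i = \<tau> i (t i - 1) \<or> p i = \<tau> i (t i))"
    and s: "\<forall>i\<in>{1..d}. \<forall>k\<le>n. (k \<le> \<tau> i (t i - 1) \<longrightarrow> mean_s w i k = a i k)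
              \<and> (\<tau> i (t i) \<le> k \<longrightarrow> mean_s w i k = f i)"
    and \<theta>: "mean_theta w = theta_map \<kappa> \<I> c f"
    using ex_interpolating_distribution[OF cell] by blast
  have "supported_in_cell t w"
    using supp cell unfolding supported_in_cell_def by fastforce
  moreover have "(\<lambda>i. mean_s w i n) = f"
  proof
    fix i show "mean_s w i n = f i"
      using s f \<tau>_le_n t mean_s_outside[of i w n] unfolding box_def
      by (cases "i \<in> {1..d}") (auto simp: PiE_iff)
  qed
  ultimately show ?thesis using w \<theta> by blast
qed

lemma convex_supported_distributions: "convex {w. is_distribution w \<and> supported_in_cell t w}"
  by (rule convexI) (auto intro: is_distribution_convex_combination supported_in_cell_convex_combination)

lemma projection_binary_formulation:
  "(\<lambda>(\<theta>, w, s, \<delta>). (\<lambda>i. s i n, \<theta>)) ` binary_formulation = target_set d \<kappa> \<I> c a \<tau> l"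
proof
  show "(\<lambda>(\<theta>, w, s, \<delta>). (\<lambda>i. s i n, \<theta>)) ` binary_formulation \<subseteq> target_set d \<kappa> \<I> c a \<tau> l"
  proof clarify
    fix \<theta> w s \<delta> assume x: "(\<theta>, w, s, \<delta>) \<in> binary_formulation"
    then have dist: "is_distribution w" and eqs: "\<theta> = mean_theta w" "s = mean_s w"
      by (auto simp: formulation_iff)
    obtain t where t: "t \<in> cells" "supported_in_cell t w"
      using binary_supported_in_cell[OF x] by blast
    then have "(\<lambda>i. s i n, \<theta>) \<in> convex hull cell_graph t"
      unfolding eqs using dist by (intro supported_mem_convex_hull_cell_graph)
    moreover have "box d a \<tau> t \<in> Hboxes d a \<tau> l"
      unfolding Hboxes_def using t(1) by blast
    ultimately show "(\<lambda>i. s i n, \<theta>) \<in> target_set d \<kappa> \<I> c a \<tau> l"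
      unfolding target_set_def cell_graph_def by blast
  qed
next
  show "target_set d \<kappa> \<I> c a \<tau> l \<subseteq> (\<lambda>(\<theta>, w, s, \<delta>). (\<lambda>i. s i n, \<theta>)) ` binary_formulation"
  proof
    fix y assume "y \<in> target_set d \<kappa> \<I> c a \<tau> l"
    then obtain t where t: "t \<in> cells" and y: "y \<in> convex hull cell_graph t"
      unfolding target_set_def Hboxes_def cell_graph_def by blast
    let ?L = "\<lambda>w. ((\<lambda>i. mean_s w i n), mean_theta w)"
    let ?W = "{w. is_distribution w \<and> supported_in_cell t w}"
    have "cell_graph t \<subseteq> ?L ` ?W"
      using box_point_ex_supported_distribution[OF t] unfolding cell_graph_def by fastforce
    moreover have "convex (?L ` ?W)"
      by (rule convex_linear_image[OF linear_mean_projection convex_supported_distributions])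
    ultimately have "convex hull cell_graph t \<subseteq> ?L ` ?W"
      by (rule hull_minimal)
    then obtain w where "y = ?L w" "is_distribution w" "supported_in_cell t w"
      using y by blast
    moreover have "(mean_theta w, w, mean_s w, cell_delta t) \<in> binary_formulation"
      using cell_delta_mem_binary t calculation(2,3) by blast
    ultimately show "y \<in> (\<lambda>(\<theta>, w, s, \<delta>). (\<lambda>i. s i n, \<theta>)) ` binary_formulation"
      by force
  qed
qed

lemma ideal_formulation: "ideal_formulation d n \<kappa> \<I> c a \<tau> l"
  unfolding ideal_formulation_def projection_binary_formulation
proof (intro conjI refl allI impI ballI)
  fix \<theta> w s \<delta> i t
  assume "(\<theta>, w, s, \<delta>) extreme_point_of relaxed_formulation" and "i \<in> {1..d}" "t \<in> {1..l i - 1}"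
  moreover from this(1) have "inc_constraints True w \<delta>"
    using extreme_point_of_relaxed_formulation[of "(\<theta>, w, s, \<delta>)"] formulation_iff by blast
  ultimately show "\<delta> i t \<in> {0, 1}"
    unfolding inc_constraints_def if_True by blast
qed

end

section \<open>The MICP relaxation\<close>

lemma ex_crossing_step:
  fixes g :: "nat \<Rightarrow> 'a::linorder"
  assumes "g 0 \<le> y" and "y < g m"
  shows "\<exists>j<m. g j \<le> y \<and> y < g (Suc j)"
  using assms(2)
proof (induction m)
  case 0
  then show ?case using assms(1) by simp
next
  case (Suc m)
  show ?case
  proof (cases "y < g m")
    case True
    then show ?thesis using Suc.IH less_Suc_eq by blast
  next
    case False
    then show ?thesis using Suc.prems by auto
  qed
qed

context hq_inc
begin

lemma ex_grid_step:
  assumes i: "i \<in> {1..d}" and "a i 0 \<le> y" and "y \<le> a i n"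
  shows "\<exists>j<n. a i j \<le> y \<and> y \<le> a i (Suc j)"
proof (cases "y < a i n")
  case True
  then show ?thesis using ex_crossing_step[of "a i" y n] assms(2) by (auto intro: less_imp_le)
next
  case False
  then have "a i (n - 1) \<le> y" "y \<le> a i (Suc (n - 1))"
    using assms(3) a_le[OF i, of "n - 1" n] n_pos by auto
  then show ?thesis using n_pos by (intro exI[of _ "n - 1"]) auto
qed

lemma ex_cell_containing_step:
  assumes "\<forall>i\<in>{1..d}. j i < n"
  shows "\<exists>t\<in>cells. \<forall>i\<in>{1..d}. \<tau> i (t i - 1) \<le> j i \<and> j i < \<tau> i (t i)"
proof -
  have "\<exists>t. t \<in> {1..l i} \<and> \<tau> i (t - 1) \<le> j i \<and> j i < \<tau> i t" if i: "i \<in> {1..d}" for i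
  proof -
    obtain k where "k < l i" "\<tau> i k \<le> j i" "j i < \<tau> i (Suc k)"
      using ex_crossing_step[of "\<tau> i" "j i" "l i"] assms i \<tau>_0[OF i] \<tau>_last[OF i] by auto
    then show ?thesis by (intro exI[of _ "Suc k"]) auto
  qed
  then obtain t where t: "\<forall>i\<in>{1..d}. t i \<in> {1..l i} \<and> \<tau> i (t i - 1) \<le> j i \<and> j i < \<tau> i (t i)"
    by metis
  then have "restrict t {1..d} \<in> cells" by auto
  then show ?thesis using t by (intro bexI[of _ "restrict t {1..d}"]) auto
qed

lemma ex_binary_point_min_grid:
  assumes "\<forall>i\<in>{1..d}. a i 0 \<le> y i \<and> y i \<le> a i n"
  shows "\<exists>w \<delta>. (mean_theta w, w, mean_s w, \<delta>) \<in> binary_formulation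
    \<and> mean_theta w = theta_map \<kappa> \<I> c y \<and> (\<forall>i\<in>{1..d}. \<forall>k\<le>n. mean_s w i k = min (a i k) (y i))"
proof -
  have "\<forall>i\<in>{1..d}. \<exists>j<n. a i j \<le> y i \<and> y i \<le> a i (Suc j)"
    using assms ex_grid_step by blast
  then obtain j where j: "\<forall>i\<in>{1..d}. j i < n \<and> a i (j i) \<le> y i \<and> y i \<le> a i (Suc (j i))"
    by metis
  then have "\<forall>i\<in>{1..d}. j i < Suc (j i) \<and> Suc (j i) \<le> n \<and> a i (j i) \<le> y i \<and> y i \<le> a i (Suc (j i))"
    by auto
  from ex_interpolating_distribution[OF this] obtain w where dist: "is_distribution w"
    and supp: "\<forall>p\<in>E. w p \<noteq> 0 \<longrightarrow> (\<forall>i\<in>{1..d}. p i = j i \<or> p i = Suc (j i))"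
    and s: "\<forall>i\<in>{1..d}. \<forall>k\<le>n. (k \<le> j i \<longrightarrow> mean_s w i k = a i k) \<and> (Suc (j i) \<le> k \<longrightarrow> mean_s w i k = y i)"
    and \<theta>: "mean_theta w = theta_map \<kappa> \<I> c y"
    by blast
  obtain t where t: "t \<in> cells" "\<forall>i\<in>{1..d}. \<tau> i (t i - 1) \<le> j i \<and> j i < \<tau> i (t i)"
    using ex_cell_containing_step j by blast
  have "supported_in_cell t w"
    using supp t(2) unfolding supported_in_cell_def by fastforce
  then have "(mean_theta w, w, mean_s w, cell_delta t) \<in> binary_formulation"
    by (rule cell_delta_mem_binary[OF t(1) dist])
  moreover have "mean_s w i k = min (a i k) (y i)" if i: "i \<in> {1..d}" and k: "k \<le> n" for i k
  proof (cases "k \<le> j i")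
    case True
    then have "a i k \<le> y i" using j a_le[OF i, of k "j i"] i by fastforce
    then show ?thesis using s i k True by simp
  next
    case False
    then have "y i \<le> a i k" using j a_le[OF i, of "Suc (j i)" k] i k by fastforce
    then show ?thesis using s i k False by simp
  qed
  ultimately show ?thesis using \<theta> by blast
qed

lemma graph_subset_projection_ext_formulation:
  fixes X :: "'x set" and f :: "'x \<Rightarrow> nat \<Rightarrow> real" and u :: "'x \<Rightarrow> nat \<Rightarrow> nat \<Rightarrow> real"
  assumes f_bounds: "\<forall>x\<in>X. \<forall>i\<in>{1..d}. a i 0 \<le> f x i \<and> f x i \<le> a i n"
    and u_bounds: "\<forall>x\<in>X. \<forall>i\<in>{1..d}. u x i 0 = a i 0 \<and> u x i n = f x i
           \<and> (\<forall>j\<in>{1..n-1}. u x i j \<le> min (f x i) (a i j))"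
    and graph_W: "{(x, (\<lambda>i. if i \<in> {1..d} then f x i else 0)) | x. x \<in> X} \<subseteq> W"
  shows "{(x, theta_map \<kappa> \<I> c (f x)) | x. x \<in> X}
    \<subseteq> (\<lambda>(x, \<theta>, w, s, \<delta>). (x, \<theta>)) ` ext_formulation True d n \<kappa> \<I> c a \<tau> l X u W"
proof clarify
  fix x assume x: "x \<in> X"
  obtain w \<delta> where bin: "(mean_theta w, w, mean_s w, \<delta>) \<in> binary_formulation"
    and \<theta>: "mean_theta w = theta_map \<kappa> \<I> c (f x)"
    and s: "\<forall>i\<in>{1..d}. \<forall>k\<le>n. mean_s w i k = min (a i k) (f x i)"
    using ex_binary_point_min_grid[of "f x"] f_bounds x by blast
  have "u x i k \<le> mean_s w i k" if i: "i \<in> {1..d}" and k: "k \<in> {0..n}" for i k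
  proof -
    consider "k = 0" | "k = n" | "k \<in> {1..n - 1}" using k by fastforce
    then have "u x i k \<le> min (a i k) (f x i)"
      using u_bounds f_bounds x i by cases auto
    then show ?thesis using s i k by simp
  qed
  moreover have "(\<lambda>i. mean_s w i n) = (\<lambda>i. if i \<in> {1..d} then f x i else 0)"
    using s f_bounds x by (auto simp: fun_eq_iff mean_s_outside)
  then have "(x, \<lambda>i. mean_s w i n) \<in> W"
    using graph_W x by auto
  ultimately have "(x, mean_theta w, w, mean_s w, \<delta>) \<in> ext_formulation True d n \<kappa> \<I> c a \<tau> l X u W"
    using bin x unfolding ext_formulation_def by auto
  then show "(x, theta_map \<kappa> \<I> c (f x))
      \<in> (\<lambda>(x, \<theta>, w, s, \<delta>). (x, \<theta>)) ` ext_formulation True d n \<kappa> \<I> c a \<tau> l X u W"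
    unfolding \<theta> by force
qed

lemma convex_ext_formulation:
  fixes X :: "'x::real_vector set" and u :: "'x \<Rightarrow> nat \<Rightarrow> nat \<Rightarrow> real"
  assumes "convex X" and u_convex: "\<forall>i\<in>{1..d}. \<forall>j\<in>{0..n}. convex_on X (\<lambda>x. u x i j)"
    and "convex W"
  shows "convex (ext_formulation False d n \<kappa> \<I> c a \<tau> l X u W)"
proof (rule convexI)
  fix z1 z2 and \<alpha> \<beta> :: real
  assume z1: "z1 \<in> ext_formulation False d n \<kappa> \<I> c a \<tau> l X u W"
    and z2: "z2 \<in> ext_formulation False d n \<kappa> \<I> c a \<tau> l X u W"
    and \<alpha>\<beta>: "0 \<le> \<alpha>" "0 \<le> \<beta>" "\<alpha> + \<beta> = 1"
  obtain x1 \<theta>1 w1 s1 \<delta>1 x2 \<theta>2 w2 s2 \<delta>2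
    where z: "z1 = (x1, \<theta>1, w1, s1, \<delta>1)" "z2 = (x2, \<theta>2, w2, s2, \<delta>2)"
    by (cases z1, cases z2) auto
  have h1: "(\<theta>1, w1, s1, \<delta>1) \<in> relaxed_formulation" "x1 \<in> X"
      "\<forall>i\<in>{1..d}. \<forall>j\<in>{0..n}. u x1 i j \<le> s1 i j" "(x1, \<lambda>i. s1 i n) \<in> W"
    and h2: "(\<theta>2, w2, s2, \<delta>2) \<in> relaxed_formulation" "x2 \<in> X"
      "\<forall>i\<in>{1..d}. \<forall>j\<in>{0..n}. u x2 i j \<le> s2 i j" "(x2, \<lambda>i. s2 i n) \<in> W"
    using z1 z2 unfolding z ext_formulation_def by auto
  have "\<alpha> *\<^sub>R (\<theta>1, w1, s1, \<delta>1) + \<beta> *\<^sub>R (\<theta>2, w2, s2, \<delta>2) \<in> relaxed_formulation"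
    using convex_relaxed_formulation h1(1) h2(1) \<alpha>\<beta> by (rule convexD)
  moreover have "\<alpha> *\<^sub>R x1 + \<beta> *\<^sub>R x2 \<in> X"
    using assms(1) h1(2) h2(2) \<alpha>\<beta> by (rule convexD)
  moreover have "u (\<alpha> *\<^sub>R x1 + \<beta> *\<^sub>R x2) i j \<le> \<alpha> * s1 i j + \<beta> * s2 i j"
    if "i \<in> {1..d}" "j \<in> {0..n}" for i j
  proof -
    have \<alpha>: "\<alpha> = 1 - \<beta>" using \<alpha>\<beta> by simp
    have "u (\<alpha> *\<^sub>R x1 + \<beta> *\<^sub>R x2) i j \<le> \<alpha> * u x1 i j + \<beta> * u x2 i j"
      unfolding \<alpha> using u_convex that h1(2) h2(2) \<alpha>\<beta> by (intro convex_onD) auto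
    also have "\<dots> \<le> \<alpha> * s1 i j + \<beta> * s2 i j"
      using h1(3) h2(3) that \<alpha>\<beta> by (intro add_mono mult_left_mono) auto
    finally show ?thesis .
  qed
  moreover have "\<alpha> *\<^sub>R (x1, \<lambda>i. s1 i n) + \<beta> *\<^sub>R (x2, \<lambda>i. s2 i n) \<in> W"
    using assms(3) h1(4) h2(4) \<alpha>\<beta> by (rule convexD)
  ultimately show "\<alpha> *\<^sub>R z1 + \<beta> *\<^sub>R z2 \<in> ext_formulation False d n \<kappa> \<I> c a \<tau> l X u W"
    unfolding z ext_formulation_def by (simp add: scaleR_fun_def plus_fun_def)
qed

end

theorem corollary7p4:
  fixes d n \<kappa> :: nat
    and \<I> :: "nat \<Rightarrow> nat set set" and c :: "nat \<Rightarrow> nat set \<Rightarrow> real"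
    and a :: "nat \<Rightarrow> nat \<Rightarrow> real"
    and \<tau> :: "nat \<Rightarrow> nat \<Rightarrow> nat" and l :: "nat \<Rightarrow> nat"
    and X :: "'x::euclidean_space set"
    and f :: "'x \<Rightarrow> nat \<Rightarrow> real"
    and u :: "'x \<Rightarrow> nat \<Rightarrow> nat \<Rightarrow> real"
    and W :: "('x \<times> (nat \<Rightarrow> real)) set"
  assumes "d \<ge> 1" and "n \<ge> 1" and "\<kappa> \<ge> 1"
    and "\<forall>k\<in>{1..\<kappa>}. \<I> k \<subseteq> Pow {1..d}"
    and "\<forall>i\<in>{1..d}. strict_mono_on {0..n} (a i)"
    and "\<forall>i\<in>{1..d}. \<tau> i 0 = 0 \<and> \<tau> i (l i) = n \<and> strict_mono_on {0..l i} (\<tau> i)"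
    and "\<forall>x\<in>X. \<forall>i\<in>{1..d}. a i 0 \<le> f x i \<and> f x i \<le> a i n"
    and "\<forall>i\<in>{1..d}. \<forall>j\<in>{0..n}. convex_on X (\<lambda>x. u x i j)"
    and "\<forall>x\<in>X. \<forall>i\<in>{1..d}. u x i 0 = a i 0 \<and> u x i n = f x i
           \<and> (\<forall>j\<in>{1..n-1}. u x i j \<le> min (f x i) (a i j))"
    and "convex W"
    and "{(x, (\<lambda>i. if i \<in> {1..d} then f x i else 0)) | x. x \<in> X} \<subseteq> W"
  shows "ideal_formulation d n \<kappa> \<I> c a \<tau> l
         \<and> MICP_relaxation_graph d n \<kappa> \<I> c a \<tau> l X u W f"
proof -
  interpret hq_inc d n \<kappa> \<I> c a \<tau> l
    using assms(2,4-6) by (rule hq_inc.intro)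
  have "convex_on X (\<lambda>x. u x 1 0)"
    using assms(1,8) by auto
  then have "convex X"
    by (simp add: convex_on_def)
  show ?thesis
    unfolding MICP_relaxation_graph_def
    using ideal_formulation graph_subset_projection_ext_formulation[OF assms(7,9,11)]
      convex_ext_formulation[OF \<open>convex X\<close> assms(8,10)]
    by blast
qed

end
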